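(* Let $\mathbf z=(z_i)_{i=1}^N$ be a crystal, $a_0\in(0,a)$, and let $\mathbf x=(x_i)_{i=1}^N$ satisfy $|x_i-x_j|>b$ for all non-neighboring pairs $\{i,j\}$ (of $\mathbf z$) and $|x_i-x_j|\ge a_0$ for all neighboring pairs $\langle i,j\rangle$. Put $\mathbf h=\mathbf x-\mathbf z$. Then there exists $C>0$, not depending on $\mathbf x$, $\mathbf z$ or $N$, such that $$\Big|H(\mathbf x)-\{H(\mathbf z)+\tfrac12\mathcal E_1(\mathbf h)\}\Big|\le C\sum_{\langle i,j\rangle}|h_i-h_j|^3,\qquad |G(\mathbf x)-\mathcal E_2(\mathbf h)|\le C\sum_{\langle i,j\rangle}|h_i-h_j|^3.$$
   Context: Let $d\ge1$, $U\in C^3_0(\mathbb R)$ even with a unique $a>0$ with $U(a)=\min_{r\ge0}U(r)$ and $\check c:=U''(a)>0$; $U(x)=U(|x|)$ on $\mathbb R^d$; $b=\inf\{r>0:U(s)=0\ \forall s>r\}$. $H(\mathbf x)=\sum_{i<j}U(x_i-x_j)$ and $G(\mathbf x)=\sum_{i=1}^N|\nabla_{x_i}H(\mathbf x)|^2$. A crystal is $\mathbf z$ with $|z_i-z_j|=a$ or $>b$ for $i\ne j$; neighboring pairs $\langle i,j\rangle$ are those with $|z_i-z_j|=a$. $\mathcal E_1(\mathbf h)=\frac{\check c}{a^2}\sum_{\langle i,j\rangle}(h_i-h_j,z_i-z_j)^2$ and $\mathcal E_2(\mathbf h)=\frac{\check c^2}{a^4}\sum_{i=1}^N\big|\sum_{j:\langle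 i,j\rangle}(h_i-h_j,z_i-z_j)(z_i-z_j)\big|^2$. *)

theory Defs
  imports "HOL-Analysis.Analysis"
begin

definition C3 :: "(real \<Rightarrow> real) \<Rightarrow> bool" where
  "C3 U \<longleftrightarrow> (\<forall>k<3. \<forall>r. ((deriv ^^ k) U has_real_derivative (deriv ^^ Suc k) U r) (at r))
     \<and> continuous_on UNIV ((deriv ^^ 3) U)"

definition compact_supp :: "(real \<Rightarrow> real) \<Rightarrow> bool" where
  "compact_supp U \<longleftrightarrow> (\<exists>R. \<forall>r. R < \<bar>r\<bar> \<longrightarrow> U r = 0)"

definition range_b :: "(real \<Rightarrow> real) \<Rightarrow> real" where
  "range_b U = Inf {r. 0 < r \<and> (\<forall>s>r. U s = 0)}"

definition Hen :: "(real \<Rightarrow> real) \<Rightarrow> nat \<Rightarrow> (nat \<Rightarrow> 'a::real_normed_vector) \<Rightarrow> real" where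
  "Hen U N x = (\<Sum>j<N. \<Sum>i<j. U (norm (x i - x j)))"

definition grad_i :: "(real \<Rightarrow> real) \<Rightarrow> nat \<Rightarrow> (nat \<Rightarrow> 'a::real_inner) \<Rightarrow> nat \<Rightarrow> 'a" where
  "grad_i U N x i = (THE D. GDERIV (\<lambda>y. Hen U N (x(i := y))) (x i) :> D)"

definition Gen :: "(real \<Rightarrow> real) \<Rightarrow> nat \<Rightarrow> (nat \<Rightarrow> 'a::real_inner) \<Rightarrow> real" where
  "Gen U N x = (\<Sum>i<N. (norm (grad_i U N x i))\<^sup>2)"

definition crystal :: "(real \<Rightarrow> real) \<Rightarrow> real \<Rightarrow> nat \<Rightarrow> (nat \<Rightarrow> 'a::real_normed_vector) \<Rightarrow> bool" where
  "crystal U a N z \<longleftrightarrow> (\<forall>i<N. \<forall>j<N. i \<noteq> j \<longrightarrow>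
      norm (z i - z j) = a \<or> norm (z i - z j) > range_b U)"

definition nbr :: "real \<Rightarrow> (nat \<Rightarrow> 'a::real_normed_vector) \<Rightarrow> nat \<Rightarrow> nat \<Rightarrow> bool" where
  "nbr a z i j \<longleftrightarrow> i \<noteq> j \<and> norm (z i - z j) = a"

definition nbr_pairs :: "real \<Rightarrow> nat \<Rightarrow> (nat \<Rightarrow> 'a::real_normed_vector) \<Rightarrow> (nat \<times> nat) set" where
  "nbr_pairs a N z = {(i, j). i < j \<and> j < N \<and> nbr a z i j}"

definition E1 :: "real \<Rightarrow> real \<Rightarrow> nat \<Rightarrow> (nat \<Rightarrow> 'a::real_inner) \<Rightarrow> (nat \<Rightarrow> 'a) \<Rightarrow> real" where
  "E1 c a N z h = c / a\<^sup>2 * (\<Sum>(i, j)\<in>nbr_pairs a N z. (inner (h i - h j) (z i - z j))\<^sup>2)"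

definition E2 :: "real \<Rightarrow> real \<Rightarrow> nat \<Rightarrow> (nat \<Rightarrow> 'a::real_inner) \<Rightarrow> (nat \<Rightarrow> 'a) \<Rightarrow> real" where
  "E2 c a N z h = c\<^sup>2 / a ^ 4 * (\<Sum>i<N.
      (norm (\<Sum>j\<in>{j. j < N \<and> nbr a z i j}. inner (h i - h j) (z i - z j) *\<^sub>R (z i - z j)))\<^sup>2)"

end

theory Submission
  imports Defs
begin

(* Only neighbouring pairs interact, in the crystal z as well as in the perturbed configuration
   x, because every other distance exceeds the range b of U.  For a neighbouring pair with bond
   d = z_i - z_j (so |d| = a) and displacement e = h_i - h_j, a third-order Taylor expansion of U
   about its minimum a together with |d + e| - a = <e, d>/a + O(|e|^2) gives
   U(|d + e|) = U(a) + c/(2 a^2) <e, d>^2 + O(|e|^3); summing over pairs gives the energy estimate.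
   Likewise the pair force U'(|d + e|) sgn(d + e) equals its linearisation c/a^2 <e, d> d up to
   O(|e|^2), where the lower bound a0 on |d + e| controls the change of direction.  As force and
   linearisation are both O(|e|), the squared norms of the total forces on a particle differ by
   O(|e|^3) times its number of neighbours, which a packing argument on the sphere of radius a
   bounds uniformly. *)

section \<open>Regularity of the potential\<close>

lemma C3_has_real_derivative:
  "C3 U \<Longrightarrow> k < 3 \<Longrightarrow> ((deriv ^^ k) U has_real_derivative (deriv ^^ Suc k) U r) (at r)"
  unfolding C3_def by blast

lemma C3_continuous_on_funpow_deriv:
  assumes "C3 U" "k \<le> 3"
  shows "continuous_on UNIV ((deriv ^^ k) U)"
proof (cases "k < 3")
  case True
  then show ?thesis
    using C3_has_real_derivative[OF assms(1)]
    by (meson DERIV_isCont continuous_at_imp_continuous_on)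
next
  case False
  with assms show ?thesis unfolding C3_def by (simp add: numeral_3_eq_3)
qed

lemma C3_Taylor:
  assumes "C3 U" "0 < n" "k + n \<le> 3"
  shows "\<exists>t. (deriv ^^ k) U x = (\<Sum>m<n. (deriv ^^ (k + m)) U c / fact m * (x - c) ^ m)
           + (deriv ^^ (k + n)) U t / fact n * (x - c) ^ n"
proof (cases "x = c")
  case True
  have "(\<Sum>m<n. (deriv ^^ (k + m)) U c / fact m * (x - c) ^ m) = (deriv ^^ k) U c"
    using True assms(2) by (simp add: zero_power sum.delta' lessThan_iff)
  then show ?thesis using True assms(2) by (intro exI[of _ c]) simp
next
  case False
  have "\<forall>m t. m < n \<and> min x c \<le> t \<and> t \<le> max x c \<longrightarrow>
      ((deriv ^^ (k + m)) U has_real_derivative (deriv ^^ Suc (k + m)) U t) (at t)"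
    using C3_has_real_derivative[OF assms(1)] assms(3) by auto
  then show ?thesis
    using Taylor[of n "\<lambda>m. (deriv ^^ (k + m)) U" "(deriv ^^ k) U" "min x c" "max x c" c x] assms False
    by auto
qed

lemma compact_supp_funpow_deriv_eq_0:
  assumes "C3 U" "\<And>r. R < \<bar>r\<bar> \<Longrightarrow> U r = 0" "k \<le> 3" "R < \<bar>r\<bar>"
  shows "(deriv ^^ k) U r = 0"
  using assms(3,4)
proof (induction k arbitrary: r)
  case 0
  then show ?case using assms(2) by simp
next
  case (Suc k)
  have der: "((deriv ^^ k) U has_real_derivative (deriv ^^ Suc k) U r) (at r)"
    using C3_has_real_derivative[OF assms(1)] Suc.prems by simp
  have "\<forall>y. \<bar>r - y\<bar> < \<bar>r\<bar> - R \<longrightarrow> (deriv ^^ k) U r = (deriv ^^ k) U y"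
    using Suc by simp
  then show ?case
    using DERIV_local_const[OF der, of "\<bar>r\<bar> - R"] Suc.prems by simp
qed

lemma C3_compact_supp_funpow_deriv_bounded:
  assumes "C3 U" "compact_supp U" "k \<le> 3"
  obtains M where "\<And>r. \<bar>(deriv ^^ k) U r\<bar> \<le> M"
proof -
  obtain R where R: "\<And>r. R < \<bar>r\<bar> \<Longrightarrow> U r = 0"
    using assms(2) unfolding compact_supp_def by auto
  have "compact ((deriv ^^ k) U ` cball 0 \<bar>R\<bar>)"
    by (rule compact_continuous_image)
      (use C3_continuous_on_funpow_deriv[OF assms(1,3)] continuous_on_subset in auto)
  then obtain B where B: "\<And>y. y \<in> (deriv ^^ k) U ` cball 0 \<bar>R\<bar> \<Longrightarrow> norm y \<le> B"
    using compact_imp_bounded bounded_iff by metis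
  have "\<bar>(deriv ^^ k) U r\<bar> \<le> max B 0" for r
  proof (cases "R < \<bar>r\<bar>")
    case True
    then show ?thesis using compact_supp_funpow_deriv_eq_0[OF assms(1) R assms(3)] by simp
  next
    case False
    then show ?thesis using B[of "(deriv ^^ k) U r"] by auto
  qed
  then show ?thesis using that by blast
qed

lemma C3_deriv_eq_0_at_min:
  assumes "C3 U" "a > 0" "\<And>r. r \<ge> 0 \<Longrightarrow> U a \<le> U r"
  shows "deriv U a = 0"
  by (rule DERIV_local_min[OF C3_has_real_derivative[OF assms(1), of 0, simplified] assms(2)])
    (use assms(3) in auto)

lemma compact_supp_range_b:
  assumes "compact_supp U"
  shows range_b_nonneg: "0 \<le> range_b U"
    and eq_0_beyond_range_b: "\<And>s. range_b U < s \<Longrightarrow> U s = 0"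
proof -
  define S where "S = {r. 0 < r \<and> (\<forall>s>r. U s = 0)}"
  obtain R where R: "\<And>r. R < \<bar>r\<bar> \<Longrightarrow> U r = 0"
    using assms unfolding compact_supp_def by auto
  have ne: "S \<noteq> {}" using R unfolding S_def by (intro ex_in_conv[THEN iffD1] exI[of _ "\<bar>R\<bar> + 1"]) auto
  have bdd: "bdd_below S" unfolding S_def bdd_below_def by (rule exI[of _ 0]) auto
  have b: "range_b U = Inf S" unfolding range_b_def S_def ..
  show "0 \<le> range_b U"
    unfolding b by (rule cInf_greatest[OF ne]) (auto simp: S_def)
  show "U s = 0" if s: "range_b U < s" for s
  proof -
    obtain r where "r \<in> S" "r < s"
      using s cInf_less_iff[OF ne bdd] unfolding b by auto
    then show ?thesis unfolding S_def by auto
  qed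
qed

lemma deriv_eq_0_beyond_range_b:
  assumes "C3 U" "compact_supp U" "range_b U < s"
  shows "deriv U s = 0"
  by (rule DERIV_local_const[OF C3_has_real_derivative[OF assms(1), of 0, simplified], of "s - range_b U"])
    (use assms eq_0_beyond_range_b[OF assms(2)] in auto)

lemma strict_min_le_range_b:
  assumes "compact_supp U" "a > 0" "\<And>r. r \<ge> 0 \<Longrightarrow> U r = U a \<Longrightarrow> r = a"
  shows "a \<le> range_b U"
proof (rule ccontr)
  assume "\<not> a \<le> range_b U"
  obtain R where R: "\<And>r. R < \<bar>r\<bar> \<Longrightarrow> U r = 0"
    using assms(1) unfolding compact_supp_def by auto
  have "U (\<bar>R\<bar> + a + 1) = U a"
    using R eq_0_beyond_range_b[OF assms(1)] \<open>\<not> a \<le> range_b U\<close> assms(2) by auto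
  then show False using assms(2) assms(3)[of "\<bar>R\<bar> + a + 1"] by auto
qed

section \<open>A single bond\<close>

lemma norm_add_linear_approx:
  fixes d e :: "'a::real_inner"
  assumes "d \<noteq> 0"
  shows "\<bar>norm (d + e) - norm d - inner e d / norm d\<bar> \<le> 2 * (norm e)\<^sup>2 / norm d"
proof -
  define a where "a = norm d"
  define r where "r = norm (d + e)"
  have a: "a > 0" using assms unfolding a_def by simp
  have ra: "r + a > 0" using a unfolding r_def by (simp add: add_nonneg_pos)
  have "r\<^sup>2 = a\<^sup>2 + 2 * inner e d + (norm e)\<^sup>2"
    unfolding r_def a_def power2_norm_eq_inner by (simp add: inner_add_left inner_add_right inner_commute)
  then have "(r - a) * (r + a) = 2 * inner e d + (norm e)\<^sup>2"
    by (simp add: algebra_simps power2_eq_square)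
  then have "r - a = (2 * inner e d + (norm e)\<^sup>2) / (r + a)"
    using ra by (simp add: eq_divide_eq)
  then have "r - a - inner e d / a = ((2 * inner e d + (norm e)\<^sup>2) * a - inner e d * (r + a)) / ((r + a) * a)"
    using a ra by (simp add: diff_frac_eq)
  also have "\<dots> = ((a - r) * inner e d + a * (norm e)\<^sup>2) / (a * (r + a))"
    by (simp add: algebra_simps)
  finally have "r - a - inner e d / a = ((a - r) * inner e d + a * (norm e)\<^sup>2) / (a * (r + a))" .
  then have "\<bar>r - a - inner e d / a\<bar> = \<bar>(a - r) * inner e d + a * (norm e)\<^sup>2\<bar> / (a * (r + a))"
    using a ra by (simp add: abs_divide)
  also have "\<dots> \<le> 2 * a * (norm e)\<^sup>2 / (a * a)"
  proof (rule frac_le)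
    have "\<bar>a - r\<bar> \<le> norm e"
      using norm_triangle_ineq3[of d "d + e"] unfolding a_def r_def by simp
    moreover have "\<bar>inner e d\<bar> \<le> norm e * a"
      using Cauchy_Schwarz_ineq2[of e d] unfolding a_def .
    ultimately have "\<bar>(a - r) * inner e d\<bar> \<le> norm e * (norm e * a)"
      unfolding abs_mult by (intro mult_mono) auto
    then show "\<bar>(a - r) * inner e d + a * (norm e)\<^sup>2\<bar> \<le> 2 * a * (norm e)\<^sup>2"
      using a by (simp add: power2_eq_square algebra_simps abs_triangle_ineq)
    show "a * a \<le> a * (r + a)" using a unfolding r_def by simp
  qed (use a in auto)
  also have "\<dots> = 2 * (norm e)\<^sup>2 / a" using a by simp
  finally show ?thesis unfolding a_def r_def .
qed

lemma norm_add_square_approx: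
  fixes d e :: "'a::real_inner"
  assumes "d \<noteq> 0"
  shows "\<bar>(norm (d + e) - norm d)\<^sup>2 - (inner e d / norm d)\<^sup>2\<bar> \<le> 4 * norm e ^ 3 / norm d"
proof -
  define p where "p = norm (d + e) - norm d"
  define q where "q = inner e d / norm d"
  have p: "\<bar>p\<bar> \<le> norm e" using norm_triangle_ineq3[of "d + e" d] unfolding p_def by simp
  have q: "\<bar>q\<bar> \<le> norm e"
    using Cauchy_Schwarz_ineq2[of e d] assms unfolding q_def by (simp add: abs_divide divide_le_eq)
  have "\<bar>p + q\<bar> \<le> 2 * norm e" using p q abs_triangle_ineq[of p q] by linarith
  have "\<bar>p\<^sup>2 - q\<^sup>2\<bar> = \<bar>p - q\<bar> * \<bar>p + q\<bar>"
    by (simp add: power2_eq_square algebra_simps flip: abs_mult)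
  also have "\<dots> \<le> (2 * (norm e)\<^sup>2 / norm d) * (2 * norm e)"
    using norm_add_linear_approx[OF assms, of e] \<open>\<bar>p + q\<bar> \<le> 2 * norm e\<close>
    unfolding p_def q_def by (intro mult_mono) auto
  also have "\<dots> = 4 * norm e ^ 3 / norm d" by (simp add: power2_eq_square power3_eq_cube)
  finally show ?thesis unfolding p_def q_def .
qed

lemma norm_sgn_add_diff_le:
  fixes d e :: "'a::real_normed_vector"
  assumes "d \<noteq> 0" "d + e \<noteq> 0"
  shows "norm (sgn (d + e) - sgn d) \<le> 2 * norm e / norm (d + e)"
proof -
  define a where "a = norm d"
  define r where "r = norm (d + e)"
  have a: "a > 0" and r: "r > 0" using assms unfolding a_def r_def by auto
  have "sgn (d + e) - sgn d = (1 / (r * a)) *\<^sub>R (a *\<^sub>R e + (a - r) *\<^sub>R d)"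
  proof -
    have "sgn (d + e) = (1 / r) *\<^sub>R (d + e)" "sgn d = (1 / a) *\<^sub>R d"
      unfolding a_def r_def by (simp_all add: sgn_div_norm divide_inverse_commute)
    then show ?thesis using a r by (simp add: algebra_simps scaleR_diff_left)
  qed
  then have "norm (sgn (d + e) - sgn d) = norm (a *\<^sub>R e + (a - r) *\<^sub>R d) / (r * a)"
    using a r by simp
  also have "\<dots> \<le> (a * norm e + norm e * a) / (r * a)"
  proof (rule divide_right_mono)
    have "\<bar>a - r\<bar> * a \<le> norm e * a"
      using norm_triangle_ineq3[of d "d + e"] a unfolding a_def r_def by (intro mult_right_mono) auto
    moreover have "norm (a *\<^sub>R e + (a - r) *\<^sub>R d) \<le> a * norm e + \<bar>a - r\<bar> * a"
      using norm_triangle_ineq[of "a *\<^sub>R e" "(a - r) *\<^sub>R d"] a unfolding a_def by simp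
    ultimately show "norm (a *\<^sub>R e + (a - r) *\<^sub>R d) \<le> a * norm e + norm e * a"
      by linarith
  qed (use a r in auto)
  also have "\<dots> = 2 * norm e / r" using a r by (simp add: field_simps)
  finally show ?thesis unfolding r_def .
qed

definition pair_force :: "(real \<Rightarrow> real) \<Rightarrow> 'a::real_normed_vector \<Rightarrow> 'a" where
  "pair_force U v = deriv U (norm v) *\<^sub>R sgn v"

lemma pair_energy_Taylor:
  fixes d e :: "'a::real_inner"
  assumes "C3 U" "deriv U a = 0" "\<And>r. \<bar>(deriv ^^ 3) U r\<bar> \<le> M3" "norm d = a" "a > 0"
  defines "c \<equiv> deriv (deriv U) a"
  shows "\<bar>U (norm (d + e)) - U a - 1/2 * (c / a\<^sup>2 * (inner e d)\<^sup>2)\<bar> \<le> (M3 / 6 + 2 * \<bar>c\<bar> / a) * norm e ^ 3"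
proof -
  define r where "r = norm (d + e)"
  obtain t where "(deriv ^^ 0) U r = (\<Sum>m<3. (deriv ^^ (0 + m)) U a / fact m * (r - a) ^ m)
      + (deriv ^^ (0 + 3)) U t / fact 3 * (r - a) ^ 3"
    using C3_Taylor[OF assms(1), of 3 0 r a] by auto
  then have "U r = U a + c / 2 * (r - a)\<^sup>2 + (deriv ^^ 3) U t / 6 * (r - a) ^ 3"
    using assms(2) by (simp add: numeral_3_eq_3 numeral_2_eq_2 c_def)
  then have "U r - U a - 1/2 * (c / a\<^sup>2 * (inner e d)\<^sup>2)
      = c / 2 * ((r - a)\<^sup>2 - (inner e d / a)\<^sup>2) + (deriv ^^ 3) U t / 6 * (r - a) ^ 3"
    by (simp add: power_divide algebra_simps)
  moreover have "\<bar>c / 2 * ((r - a)\<^sup>2 - (inner e d / a)\<^sup>2)\<bar> \<le> \<bar>c\<bar> / 2 * (4 * norm e ^ 3 / a)"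
  proof -
    have "\<bar>(r - a)\<^sup>2 - (inner e d / a)\<^sup>2\<bar> \<le> 4 * norm e ^ 3 / a"
      using norm_add_square_approx[of d e] assms(4,5) unfolding r_def by auto
    then have "\<bar>c\<bar> / 2 * \<bar>(r - a)\<^sup>2 - (inner e d / a)\<^sup>2\<bar> \<le> \<bar>c\<bar> / 2 * (4 * norm e ^ 3 / a)"
      by (rule mult_left_mono) simp
    then show ?thesis by (simp add: abs_mult)
  qed
  moreover have "\<bar>(deriv ^^ 3) U t / 6 * (r - a) ^ 3\<bar> \<le> M3 / 6 * norm e ^ 3"
  proof -
    have "\<bar>r - a\<bar> ^ 3 \<le> norm e ^ 3"
      using norm_triangle_ineq3[of "d + e" d] assms(4) unfolding r_def by (intro power_mono) auto
    then show ?thesis using assms(3)[of t] by (simp add: abs_mult power_abs mult_mono)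
  qed
  ultimately have "\<bar>U r - U a - 1/2 * (c / a\<^sup>2 * (inner e d)\<^sup>2)\<bar> \<le> \<bar>c\<bar> / 2 * (4 * norm e ^ 3 / a) + M3 / 6 * norm e ^ 3"
    by linarith
  also have "\<dots> = (M3 / 6 + 2 * \<bar>c\<bar> / a) * norm e ^ 3" by (simp add: algebra_simps)
  finally show ?thesis unfolding r_def .
qed

lemma norm_pair_force_le:
  assumes "C3 U" "deriv U a = 0" "\<And>r. \<bar>(deriv ^^ 2) U r\<bar> \<le> M2"
  shows "norm (pair_force U v) \<le> M2 * \<bar>norm v - a\<bar>"
proof -
  obtain t where "(deriv ^^ 1) U (norm v) = (\<Sum>m<1. (deriv ^^ (1 + m)) U a / fact m * (norm v - a) ^ m)
      + (deriv ^^ (1 + 1)) U t / fact 1 * (norm v - a) ^ 1"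
    using C3_Taylor[OF assms(1), of 1 1 "norm v" a] by auto
  then have "deriv U (norm v) = (deriv ^^ 2) U t * (norm v - a)"
    using assms(2) by (simp add: numeral_2_eq_2)
  then have "norm (pair_force U v) \<le> \<bar>(deriv ^^ 2) U t\<bar> * \<bar>norm v - a\<bar>"
    unfolding pair_force_def by (simp add: norm_sgn abs_mult)
  also have "\<dots> \<le> M2 * \<bar>norm v - a\<bar>" using assms(3)[of t] by (simp add: mult_right_mono)
  finally show ?thesis .
qed

lemma pair_force_linear_approx:
  fixes d e :: "'a::real_inner"
  assumes "C3 U" "deriv U a = 0" "\<And>r. \<bar>(deriv ^^ 3) U r\<bar> \<le> M3" "norm d = a" "a > 0" "d + e \<noteq> 0"
  defines "c \<equiv> deriv (deriv U) a"
  shows "norm (pair_force U (d + e) - (c / a\<^sup>2 * inner e d) *\<^sub>R d)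
    \<le> (M3 / 2 + 2 * \<bar>c\<bar> / a + 2 * \<bar>c\<bar> / norm (d + e)) * (norm e)\<^sup>2"
proof -
  define r where "r = norm (d + e)"
  define u where "u = sgn (d + e)"
  have d: "d \<noteq> 0" using assms(4,5) by auto
  have ra: "\<bar>r - a\<bar> \<le> norm e" using norm_triangle_ineq3[of "d + e" d] assms(4) unfolding r_def by simp
  have ed: "\<bar>inner e d\<bar> \<le> norm e * a" using Cauchy_Schwarz_ineq2[of e d] assms(4) by simp
  obtain t where "(deriv ^^ 1) U r = (\<Sum>m<2. (deriv ^^ (1 + m)) U a / fact m * (r - a) ^ m)
      + (deriv ^^ (1 + 2)) U t / fact 2 * (r - a) ^ 2"
    using C3_Taylor[OF assms(1), of 2 1 r a] by auto
  moreover define \<rho> where "\<rho> = (deriv ^^ 3) U t / 2 * (r - a)\<^sup>2"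
  ultimately have U'r: "deriv U r = c * (r - a) + \<rho>"
    using assms(2) by (simp add: numeral_2_eq_2 numeral_3_eq_3 c_def)
  define \<delta> where "\<delta> = r - a - inner e d / a"
  have "(c / a\<^sup>2 * inner e d) *\<^sub>R d = (c * inner e d / a) *\<^sub>R sgn d"
    using assms(4,5) by (simp add: sgn_div_norm power2_eq_square field_simps)
  then have "norm (pair_force U (d + e) - (c / a\<^sup>2 * inner e d) *\<^sub>R d)
      = norm (\<rho> *\<^sub>R u + (c * \<delta>) *\<^sub>R u + (c * inner e d / a) *\<^sub>R (u - sgn d))"
    unfolding pair_force_def r_def[symmetric] u_def[symmetric] U'r \<delta>_def
    by (simp add: algebra_simps)
  also have "\<dots> \<le> norm (\<rho> *\<^sub>R u + (c * \<delta>) *\<^sub>R u) + norm ((c * inner e d / a) *\<^sub>R (u - sgn d))"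
    by (rule norm_triangle_ineq)
  also have "\<dots> \<le> norm (\<rho> *\<^sub>R u) + norm ((c * \<delta>) *\<^sub>R u) + norm ((c * inner e d / a) *\<^sub>R (u - sgn d))"
    by (intro add_right_mono norm_triangle_ineq)
  also have "\<dots> = \<bar>\<rho>\<bar> + \<bar>c\<bar> * \<bar>\<delta>\<bar> + \<bar>c\<bar> * \<bar>inner e d\<bar> / a * norm (u - sgn d)"
    using assms(5,6) by (simp add: u_def norm_sgn abs_mult)
  also have "\<dots> \<le> M3 / 2 * (norm e)\<^sup>2 + \<bar>c\<bar> * (2 * (norm e)\<^sup>2 / a) + \<bar>c\<bar> * (norm e * a) / a * (2 * norm e / r)"
  proof -
    have "\<bar>\<rho>\<bar> \<le> M3 / 2 * (norm e)\<^sup>2"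
      using assms(3)[of t] power_mono[OF ra abs_ge_zero, of 2]
      unfolding \<rho>_def by (simp add: abs_mult power_abs mult_mono)
    moreover have "\<bar>c\<bar> * \<bar>\<delta>\<bar> \<le> \<bar>c\<bar> * (2 * (norm e)\<^sup>2 / a)"
      using norm_add_linear_approx[OF d, of e] assms(4) unfolding \<delta>_def r_def
      by (intro mult_left_mono) auto
    moreover have "\<bar>c\<bar> * \<bar>inner e d\<bar> / a * norm (u - sgn d) \<le> \<bar>c\<bar> * (norm e * a) / a * (2 * norm e / r)"
      using norm_sgn_add_diff_le[OF d assms(6)] ed assms(5) unfolding u_def r_def
      by (intro mult_mono divide_right_mono mult_left_mono) auto
    ultimately show ?thesis by linarith
  qed
  also have "\<dots> = (M3 / 2 + 2 * \<bar>c\<bar> / a + 2 * \<bar>c\<bar> / r) * (norm e)\<^sup>2"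
    using assms(5) by (simp add: power2_eq_square field_simps)
  finally show ?thesis unfolding r_def .
qed

section \<open>The gradient of the energy\<close>

lemma GDERIV_sum:
  assumes "finite A" "\<And>a. a \<in> A \<Longrightarrow> GDERIV (f a) x :> Df a"
  shows "GDERIV (\<lambda>y. \<Sum>a\<in>A. f a y) x :> (\<Sum>a\<in>A. Df a)"
  using assms unfolding gderiv_def inner_sum_right by (intro has_derivative_sum) auto

lemma GDERIV_unique:
  assumes "GDERIV f x :> D1" "GDERIV f x :> D2"
  shows "D1 = D2"
proof -
  have "(\<lambda>h. inner h D1) = (\<lambda>h. inner h D2)"
    using has_derivative_unique assms unfolding gderiv_def by blast
  then have "inner (D1 - D2) D1 = inner (D1 - D2) D2" by metis
  then have "inner (D1 - D2) (D1 - D2) = 0" by (simp add: inner_diff_right)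
  then show ?thesis by simp
qed

lemma GDERIV_pair_potential:
  fixes v w :: "'a::real_inner"
  assumes "v \<noteq> w" "(U has_real_derivative deriv U (norm (v - w))) (at (norm (v - w)))"
  shows "GDERIV (\<lambda>y. U (norm (y - w))) v :> pair_force U (v - w)"
proof -
  have "((\<lambda>y. norm (y - w)) has_derivative (\<lambda>h. inner h (sgn (v - w)))) (at v)"
    using has_derivative_compose[OF has_derivative_diff[OF has_derivative_ident has_derivative_const]
        has_derivative_norm] assms(1)
    by simp
  then have "GDERIV (\<lambda>y. norm (y - w)) v :> sgn (v - w)" unfolding gderiv_def .
  from GDERIV_DERIV_compose[OF this assms(2)] show ?thesis unfolding pair_force_def .
qed

lemma Hen_eq_sum_pairs:
  "Hen U N w = (\<Sum>(i, j)\<in>{(i, j). i < j \<and> j < N}. U (norm (w i - w j)))"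
proof -
  have "Hen U N w = (\<Sum>(j, i)\<in>(SIGMA j:{..<N}. {..<j}). U (norm (w i - w j)))"
    unfolding Hen_def by (rule sum.Sigma) auto
  also have "\<dots> = (\<Sum>p\<in>prod.swap ` (SIGMA j:{..<N}. {..<j}). case p of (i, j) \<Rightarrow> U (norm (w i - w j)))"
    by (subst sum.reindex) (auto simp: comp_def case_prod_beta)
  also have "prod.swap ` (SIGMA j:{..<N}. {..<j}) = {(i, j). i < j \<and> j < N}"
    by (auto simp: image_iff)
  finally show ?thesis .
qed

lemma Hen_split_at:
  assumes "i < N"
  shows "Hen U N w = (\<Sum>j\<in>{..<N} - {i}. U (norm (w i - w j)))
    + (\<Sum>(k, j)\<in>{(k, j). k < j \<and> j < N \<and> k \<noteq> i \<and> j \<noteq> i}. U (norm (w k - w j)))"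
proof -
  define P where "P = {(k, j). k < j \<and> j < N}"
  define T where "T = {p. fst p = i \<or> snd p = i}"
  have "finite P" unfolding P_def by (rule finite_subset[of _ "{..<N} \<times> {..<N}"]) auto
  then have "Hen U N w = (\<Sum>(k, j)\<in>P \<inter> T. U (norm (w k - w j))) + (\<Sum>(k, j)\<in>P - T. U (norm (w k - w j)))"
    unfolding Hen_eq_sum_pairs P_def[symmetric] by (rule sum.Int_Diff)
  moreover have "(\<Sum>(k, j)\<in>P \<inter> T. U (norm (w k - w j))) = (\<Sum>j\<in>{..<N} - {i}. U (norm (w i - w j)))"
    by (rule sum.reindex_bij_witness[where j = "\<lambda>p. if fst p = i then snd p else fst p"
          and i = "\<lambda>j. (min i j, max i j)"])
      (use assms in \<open>auto simp: P_def T_def min_def max_def norm_minus_commute\<close>)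
  moreover have "P - T = {(k, j). k < j \<and> j < N \<and> k \<noteq> i \<and> j \<noteq> i}"
    unfolding P_def T_def by auto
  ultimately show ?thesis by simp
qed

lemma grad_i_eq_sum_pair_force:
  fixes x :: "nat \<Rightarrow> 'a::real_inner"
  assumes "C3 U" "i < N" "\<And>j. j < N \<Longrightarrow> j \<noteq> i \<Longrightarrow> x i \<noteq> x j"
  shows "grad_i U N x i = (\<Sum>j\<in>{..<N} - {i}. pair_force U (x i - x j))"
proof -
  define R where "R = (\<Sum>(k, j)\<in>{(k, j). k < j \<and> j < N \<and> k \<noteq> i \<and> j \<noteq> i}. U (norm (x k - x j)))"
  have "(\<lambda>y. Hen U N (x(i := y))) = (\<lambda>y. (\<Sum>j\<in>{..<N} - {i}. U (norm (y - x j))) + R)"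
    unfolding Hen_split_at[OF assms(2)] R_def by (auto intro!: ext sum.cong)
  moreover have "GDERIV (\<lambda>y. (\<Sum>j\<in>{..<N} - {i}. U (norm (y - x j))) + R) (x i)
      :> (\<Sum>j\<in>{..<N} - {i}. pair_force U (x i - x j)) + 0"
    using assms(3) C3_has_real_derivative[OF assms(1), of 0]
    by (intro GDERIV_add GDERIV_sum GDERIV_pair_potential GDERIV_const) auto
  ultimately have gd: "GDERIV (\<lambda>y. Hen U N (x(i := y))) (x i) :> (\<Sum>j\<in>{..<N} - {i}. pair_force U (x i - x j))"
    by simp
  then show ?thesis unfolding grad_i_def by (rule the_equality) (rule GDERIV_unique[OF _ gd])
qed

section \<open>Neighbours in a crystal\<close>

lemma separated_on_sphere_card_bounded:
  assumes "r > 0"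
  obtains K where "\<And>(f :: nat \<Rightarrow> 'a::euclidean_space) J.
    (\<And>j. j \<in> J \<Longrightarrow> norm (f j) = r) \<Longrightarrow>
    (\<And>j j'. j \<in> J \<Longrightarrow> j' \<in> J \<Longrightarrow> j \<noteq> j' \<Longrightarrow> r \<le> dist (f j) (f j')) \<Longrightarrow> card J \<le> K"
proof -
  have "\<forall>e>0. \<exists>k. finite k \<and> sphere (0::'a) r \<subseteq> (\<Union>p\<in>k. ball p e)"
    using compact_sphere[of "0::'a" r] unfolding compact_eq_totally_bounded by blast
  then obtain k where k: "finite k" "sphere (0::'a) r \<subseteq> (\<Union>p\<in>k. ball p (r / 2))"
    using assms half_gt_zero by blast
  have "card J \<le> card k"
    if on: "\<And>j. j \<in> J \<Longrightarrow> norm (f j) = r"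
      and sep: "\<And>j j'. j \<in> J \<Longrightarrow> j' \<in> J \<Longrightarrow> j \<noteq> j' \<Longrightarrow> r \<le> dist (f j) (f j')"
    for f :: "nat \<Rightarrow> 'a" and J
  proof -
    define centre where "centre j = (SOME p. p \<in> k \<and> f j \<in> ball p (r / 2))" for j
    have centre: "centre j \<in> k \<and> dist (centre j) (f j) < r / 2" if "j \<in> J" for j
    proof -
      have "f j \<in> sphere 0 r" using on[OF that] by simp
      then have "\<exists>p. p \<in> k \<and> f j \<in> ball p (r / 2)" using k(2) by blast
      then show ?thesis unfolding centre_def mem_ball by (rule someI_ex)
    qed
    have "inj_on centre J"
    proof (rule inj_onI, rule ccontr)
      fix j j' assume jj: "j \<in> J" "j' \<in> J" "centre j = centre j'" "j \<noteq> j'"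
      have "dist (f j) (f j') \<le> dist (centre j) (f j) + dist (centre j) (f j')" by (rule dist_triangle3)
      then show False using centre[OF jj(1)] centre[OF jj(2)] sep[OF jj(1,2,4)] jj(3) by auto
    qed
    with k(1) centre show ?thesis by (intro card_inj_on_le) auto
  qed
  then show ?thesis by (rule that)
qed

definition nbrs :: "real \<Rightarrow> nat \<Rightarrow> (nat \<Rightarrow> 'a::real_normed_vector) \<Rightarrow> nat \<Rightarrow> nat set" where
  "nbrs a N z i = {j. j < N \<and> nbr a z i j}"

lemma finite_nbrs [simp]: "finite (nbrs a N z i)"
  unfolding nbrs_def by simp

lemma finite_nbr_pairs [simp]: "finite (nbr_pairs a N z)"
  unfolding nbr_pairs_def by (rule finite_subset[of _ "{..<N} \<times> {..<N}"]) auto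

lemma nbr_sym: "nbr a z i j \<longleftrightarrow> nbr a z j i"
  unfolding nbr_def by (auto simp: norm_minus_commute)

lemma crystal_far:
  assumes "crystal U a N z" "i < N" "j < N" "i \<noteq> j" "\<not> nbr a z i j"
  shows "range_b U < norm (z i - z j)"
  using assms unfolding crystal_def nbr_def by auto

lemma crystal_card_nbrs_bounded:
  assumes "a > 0" "a \<le> range_b U"
  obtains K where "\<And>N (z :: nat \<Rightarrow> 'a::euclidean_space) i. crystal U a N z \<Longrightarrow> card (nbrs a N z i) \<le> K"
proof -
  obtain K where K: "\<And>(f :: nat \<Rightarrow> 'a) J. (\<And>j. j \<in> J \<Longrightarrow> norm (f j) = a) \<Longrightarrow>
      (\<And>j j'. j \<in> J \<Longrightarrow> j' \<in> J \<Longrightarrow> j \<noteq> j' \<Longrightarrow> a \<le> dist (f j) (f j')) \<Longrightarrow> card J \<le> K"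
    using separated_on_sphere_card_bounded[OF assms(1)] by blast
  have "card (nbrs a N z i) \<le> K" if "crystal U a N z" for N and z :: "nat \<Rightarrow> 'a" and i
  proof (rule K[of _ "\<lambda>j. z j - z i"])
    fix j j' assume "j \<in> nbrs a N z i" "j' \<in> nbrs a N z i" "j \<noteq> j'"
    then have "norm (z j - z j') = a \<or> range_b U < norm (z j - z j')"
      using that unfolding crystal_def nbrs_def by blast
    then show "a \<le> dist (z j - z i) (z j' - z i)" using assms(2) by (auto simp: dist_norm)
  qed (auto simp: nbrs_def nbr_def norm_minus_commute)
  then show ?thesis by (rule that)
qed

lemma Hen_eq_sum_nbr_pairs:
  assumes "\<And>s. range_b U < s \<Longrightarrow> U s = 0"
    and "\<And>i j. i < N \<Longrightarrow> j < N \<Longrightarrow> i \<noteq> j \<Longrightarrow> \<not> nbr a z i j \<Longrightarrow> range_b U < norm (w i - w j)"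
  shows "Hen U N w = (\<Sum>(i, j)\<in>nbr_pairs a N z. U (norm (w i - w j)))"
  unfolding Hen_eq_sum_pairs
proof (rule sum.mono_neutral_right)
  show "finite {(i, j). i < j \<and> j < N}" by (rule finite_subset[of _ "{..<N} \<times> {..<N}"]) auto
next
  show "\<forall>p\<in>{(i, j). i < j \<and> j < N} - nbr_pairs a N z. (case p of (i, j) \<Rightarrow> U (norm (w i - w j))) = 0"
  proof clarify
    fix i j assume "i < j" "j < N" "(i, j) \<notin> nbr_pairs a N z"
    then have "range_b U < norm (w i - w j)" by (intro assms(2)) (auto simp: nbr_pairs_def)
    then show "U (norm (w i - w j)) = 0" by (rule assms(1))
  qed
qed (auto simp: nbr_pairs_def)

lemma sum_nbrs_eq_double_sum_nbr_pairs:
  fixes g :: "nat \<Rightarrow> nat \<Rightarrow> 'b::comm_semiring_1"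
  assumes "\<And>i j. g i j = g j i"
  shows "(\<Sum>i<N. \<Sum>j\<in>nbrs a N z i. g i j) = 2 * (\<Sum>(i, j)\<in>nbr_pairs a N z. g i j)"
proof -
  have "(\<Sum>i<N. \<Sum>j\<in>nbrs a N z i. g i j) = (\<Sum>(i, j)\<in>(SIGMA i:{..<N}. nbrs a N z i). g i j)"
    by (rule sum.Sigma) auto
  also have "(SIGMA i:{..<N}. nbrs a N z i) = nbr_pairs a N z \<union> prod.swap ` nbr_pairs a N z"
  proof (rule set_eqI, clarify)
    fix i j
    have "(i, j) \<in> prod.swap ` nbr_pairs a N z \<longleftrightarrow> (j, i) \<in> nbr_pairs a N z" by force
    moreover have "nbr a z i j \<Longrightarrow> i \<noteq> j" by (simp add: nbr_def)
    ultimately show "(i, j) \<in> (SIGMA i:{..<N}. nbrs a N z i) \<longleftrightarrow> (i, j) \<in> nbr_pairs a N z \<union> prod.swap ` nbr_pairs a N z"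
      using nbr_sym[of a z i j] by (auto simp: nbrs_def nbr_pairs_def)
  qed
  also have "(\<Sum>(i, j)\<in>nbr_pairs a N z \<union> prod.swap ` nbr_pairs a N z. g i j)
      = (\<Sum>(i, j)\<in>nbr_pairs a N z. g i j) + (\<Sum>(i, j)\<in>prod.swap ` nbr_pairs a N z. g i j)"
    by (intro sum.union_disjoint finite_imageI finite_nbr_pairs) (auto simp: nbr_pairs_def)
  also have "(\<Sum>(i, j)\<in>prod.swap ` nbr_pairs a N z. g i j) = (\<Sum>(i, j)\<in>nbr_pairs a N z. g i j)"
    by (subst sum.reindex) (auto simp: comp_def case_prod_beta assms)
  finally show ?thesis by (simp add: mult_2)
qed

section \<open>Energy and force estimates\<close>

lemma square_mult_le_cube_add_cube:
  fixes x y :: real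
  assumes "0 \<le> x" "0 \<le> y"
  shows "x\<^sup>2 * y \<le> x ^ 3 + y ^ 3"
proof (cases "x \<le> y")
  case True
  have "x\<^sup>2 * y \<le> y\<^sup>2 * y" by (rule mult_right_mono) (use True assms power_mono in auto)
  then have "x\<^sup>2 * y \<le> y ^ 3" by (simp add: power3_eq_cube power2_eq_square)
  moreover have "0 \<le> x ^ 3" using assms by simp
  ultimately show ?thesis by linarith
next
  case False
  then have "x\<^sup>2 * y \<le> x ^ 3" using assms by (simp add: mult_left_mono power3_eq_cube power2_eq_square)
  moreover have "0 \<le> y ^ 3" using assms by simp
  ultimately show ?thesis by linarith
qed

lemma sum_squares_mult_sum_le:
  fixes e :: "'i \<Rightarrow> real"
  assumes "\<And>j. j \<in> J \<Longrightarrow> 0 \<le> e j"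
  shows "(\<Sum>j\<in>J. (e j)\<^sup>2) * (\<Sum>k\<in>J. e k) \<le> 2 * card J * (\<Sum>j\<in>J. e j ^ 3)"
proof -
  have "(\<Sum>j\<in>J. (e j)\<^sup>2) * (\<Sum>k\<in>J. e k) = (\<Sum>j\<in>J. \<Sum>k\<in>J. (e j)\<^sup>2 * e k)"
    by (simp add: sum_product)
  also have "\<dots> \<le> (\<Sum>j\<in>J. \<Sum>k\<in>J. e j ^ 3 + e k ^ 3)"
    by (intro sum_mono square_mult_le_cube_add_cube assms)
  also have "\<dots> = 2 * card J * (\<Sum>j\<in>J. e j ^ 3)"
    by (simp add: sum.distrib sum_distrib_left[symmetric] sum.swap[of _ J J] algebra_simps)
  finally show ?thesis .
qed

lemma norm_sum_square_diff_le:
  fixes F L :: "'i \<Rightarrow> 'a::real_normed_vector"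
  assumes "\<And>j. j \<in> J \<Longrightarrow> norm (F j - L j) \<le> K1 * (e j)\<^sup>2"
    and "\<And>j. j \<in> J \<Longrightarrow> norm (F j) + norm (L j) \<le> K2 * e j"
    and "\<And>j. j \<in> J \<Longrightarrow> 0 \<le> e j" "0 \<le> K1" "0 \<le> K2"
  shows "\<bar>(norm (\<Sum>j\<in>J. F j))\<^sup>2 - (norm (\<Sum>j\<in>J. L j))\<^sup>2\<bar> \<le> 2 * K1 * K2 * card J * (\<Sum>j\<in>J. e j ^ 3)"
proof -
  define A where "A = (\<Sum>j\<in>J. F j)"
  define B where "B = (\<Sum>j\<in>J. L j)"
  have "(norm A)\<^sup>2 - (norm B)\<^sup>2 = (norm A - norm B) * (norm A + norm B)"
    by (simp add: power2_eq_square algebra_simps)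
  then have "\<bar>(norm A)\<^sup>2 - (norm B)\<^sup>2\<bar> = \<bar>norm A - norm B\<bar> * (norm A + norm B)"
    by (simp add: abs_mult)
  also have "\<dots> \<le> norm (A - B) * (norm A + norm B)"
    by (rule mult_right_mono) (auto simp: norm_triangle_ineq3)
  also have "\<dots> \<le> (K1 * (\<Sum>j\<in>J. (e j)\<^sup>2)) * (K2 * (\<Sum>k\<in>J. e k))"
  proof (rule mult_mono)
    have "norm (A - B) \<le> (\<Sum>j\<in>J. norm (F j - L j))"
      unfolding A_def B_def sum_subtractf[symmetric] by (rule norm_sum)
    also have "\<dots> \<le> (\<Sum>j\<in>J. K1 * (e j)\<^sup>2)" by (rule sum_mono) (rule assms(1))
    finally show "norm (A - B) \<le> K1 * (\<Sum>j\<in>J. (e j)\<^sup>2)" by (simp add: sum_distrib_left)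
    have "norm A + norm B \<le> (\<Sum>j\<in>J. norm (F j) + norm (L j))"
      unfolding A_def B_def sum.distrib by (intro add_mono norm_sum)
    also have "\<dots> \<le> (\<Sum>j\<in>J. K2 * e j)" by (rule sum_mono) (rule assms(2))
    finally show "norm A + norm B \<le> K2 * (\<Sum>k\<in>J. e k)" by (simp add: sum_distrib_left)
  qed (use assms in \<open>auto intro!: sum_nonneg mult_nonneg_nonneg\<close>)
  also have "\<dots> = K1 * K2 * ((\<Sum>j\<in>J. (e j)\<^sup>2) * (\<Sum>k\<in>J. e k))" by (simp add: algebra_simps)
  also have "\<dots> \<le> K1 * K2 * (2 * card J * (\<Sum>j\<in>J. e j ^ 3))"
    by (intro mult_left_mono sum_squares_mult_sum_le) (use assms in auto)
  finally show ?thesis unfolding A_def B_def by (simp add: algebra_simps)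
qed

lemma Hen_harmonic_approx:
  fixes z x :: "nat \<Rightarrow> 'a::real_inner"
  assumes "C3 U" "compact_supp U" "a > 0" "deriv U a = 0" "\<And>r. \<bar>(deriv ^^ 3) U r\<bar> \<le> M3"
    and "crystal U a N z"
    and "\<And>i j. i < N \<Longrightarrow> j < N \<Longrightarrow> i \<noteq> j \<Longrightarrow> \<not> nbr a z i j \<Longrightarrow> range_b U < norm (x i - x j)"
  defines "c \<equiv> deriv (deriv U) a"
  shows "\<bar>Hen U N x - (Hen U N z + 1/2 * E1 c a N z (\<lambda>i. x i - z i))\<bar>
    \<le> (M3 / 6 + 2 * \<bar>c\<bar> / a) * (\<Sum>(i, j)\<in>nbr_pairs a N z. norm ((x i - z i) - (x j - z j)) ^ 3)"
proof -
  define e where "e i j = (x i - z i) - (x j - z j)" for i j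
  define \<Delta> where "\<Delta> i j = U (norm (x i - x j)) - U a - 1/2 * (c / a\<^sup>2 * (inner (e i j) (z i - z j))\<^sup>2)" for i j
  have nbr_norm: "norm (z i - z j) = a" if "(i, j) \<in> nbr_pairs a N z" for i j
    using that by (simp add: nbr_pairs_def nbr_def)
  have "Hen U N x = (\<Sum>(i, j)\<in>nbr_pairs a N z. U (norm (x i - x j)))"
    by (rule Hen_eq_sum_nbr_pairs[OF eq_0_beyond_range_b[OF assms(2)] assms(7)])
  moreover have "Hen U N z = (\<Sum>(i, j)\<in>nbr_pairs a N z. U a)"
  proof -
    have "Hen U N z = (\<Sum>(i, j)\<in>nbr_pairs a N z. U (norm (z i - z j)))"
      by (intro Hen_eq_sum_nbr_pairs eq_0_beyond_range_b[OF assms(2)] crystal_far[OF assms(6)])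
    also have "\<dots> = (\<Sum>(i, j)\<in>nbr_pairs a N z. U a)"
      by (rule sum.cong) (auto simp: nbr_norm)
    finally show ?thesis .
  qed
  ultimately have "Hen U N x - (Hen U N z + 1/2 * E1 c a N z (\<lambda>i. x i - z i)) = (\<Sum>(i, j)\<in>nbr_pairs a N z. \<Delta> i j)"
    unfolding E1_def \<Delta>_def e_def by (simp add: sum_subtractf sum_distrib_left case_prod_beta)
  also have "\<bar>\<dots>\<bar> \<le> (\<Sum>(i, j)\<in>nbr_pairs a N z. \<bar>\<Delta> i j\<bar>)"
    by (rule order_trans[OF sum_abs]) (simp add: case_prod_beta)
  also have "\<dots> \<le> (\<Sum>(i, j)\<in>nbr_pairs a N z. (M3 / 6 + 2 * \<bar>c\<bar> / a) * norm (e i j) ^ 3)"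
  proof (rule sum_mono, clarify)
    fix i j assume "(i, j) \<in> nbr_pairs a N z"
    moreover have "x i - x j = (z i - z j) + e i j" unfolding e_def by (simp add: algebra_simps)
    ultimately show "\<bar>\<Delta> i j\<bar> \<le> (M3 / 6 + 2 * \<bar>c\<bar> / a) * norm (e i j) ^ 3"
      using pair_energy_Taylor[OF assms(1,4,5) nbr_norm assms(3), of i j "e i j"]
      unfolding \<Delta>_def c_def by simp
  qed
  finally show ?thesis unfolding e_def by (simp add: sum_distrib_left case_prod_beta)
qed

lemma grad_i_eq_sum_nbrs_pair_force:
  fixes z x :: "nat \<Rightarrow> 'a::real_inner"
  assumes "C3 U" "compact_supp U" "0 < a0" "i < N"
    and far: "\<And>i j. i < N \<Longrightarrow> j < N \<Longrightarrow> i \<noteq> j \<Longrightarrow> \<not> nbr a z i j \<Longrightarrow> range_b U < norm (x i - x j)"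
    and near: "\<And>i j. i < N \<Longrightarrow> j < N \<Longrightarrow> nbr a z i j \<Longrightarrow> a0 \<le> norm (x i - x j)"
  shows "grad_i U N x i = (\<Sum>j\<in>nbrs a N z i. pair_force U (x i - x j))"
proof -
  have "x i \<noteq> x j" if "j < N" "j \<noteq> i" for j
    using far[OF assms(4) that(1)] near[OF assms(4) that(1)] range_b_nonneg[OF assms(2)] assms(3) that(2)
    by (cases "nbr a z i j") force+
  then have "grad_i U N x i = (\<Sum>j\<in>{..<N} - {i}. pair_force U (x i - x j))"
    by (intro grad_i_eq_sum_pair_force assms(1,4))
  also have "\<dots> = (\<Sum>j\<in>nbrs a N z i. pair_force U (x i - x j))"
  proof (rule sum.mono_neutral_right)
    show "\<forall>j\<in>{..<N} - {i} - nbrs a N z i. pair_force U (x i - x j) = 0"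
      using far[OF assms(4)] deriv_eq_0_beyond_range_b[OF assms(1,2)]
      by (auto simp: nbrs_def pair_force_def)
  qed (auto simp: nbrs_def nbr_def)
  finally show ?thesis .
qed

lemma E2_eq_sum_norm_square:
  fixes z h :: "nat \<Rightarrow> 'a::real_inner"
  shows "E2 c a N z h = (\<Sum>i<N. (norm (\<Sum>j\<in>nbrs a N z i. (c / a\<^sup>2 * inner (h i - h j) (z i - z j)) *\<^sub>R (z i - z j)))\<^sup>2)"
proof -
  have scale: "c\<^sup>2 / a ^ 4 * (norm v)\<^sup>2 = (norm ((c / a\<^sup>2) *\<^sub>R v))\<^sup>2" for v :: 'a
    by (simp add: power_mult_distrib power_divide flip: power_mult)
  have "E2 c a N z h = (\<Sum>i<N. c\<^sup>2 / a ^ 4 * (norm (\<Sum>j\<in>nbrs a N z i. inner (h i - h j) (z i - z j) *\<^sub>R (z i - z j)))\<^sup>2)"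
    unfolding E2_def nbrs_def by (simp only: sum_distrib_left)
  also have "\<dots> = (\<Sum>i<N. (norm ((c / a\<^sup>2) *\<^sub>R (\<Sum>j\<in>nbrs a N z i. inner (h i - h j) (z i - z j) *\<^sub>R (z i - z j))))\<^sup>2)"
    by (simp only: scale)
  finally show ?thesis unfolding scaleR_sum_right scaleR_scaleR .
qed

lemma Gen_harmonic_approx:
  fixes z x :: "nat \<Rightarrow> 'a::real_inner"
  assumes "C3 U" "compact_supp U" "a > 0" "deriv U a = 0"
    and "\<And>r. \<bar>(deriv ^^ 2) U r\<bar> \<le> M2" "\<And>r. \<bar>(deriv ^^ 3) U r\<bar> \<le> M3" "0 < a0"
    and far: "\<And>i j. i < N \<Longrightarrow> j < N \<Longrightarrow> i \<noteq> j \<Longrightarrow> \<not> nbr a z i j \<Longrightarrow> range_b U < norm (x i - x j)"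
    and near: "\<And>i j. i < N \<Longrightarrow> j < N \<Longrightarrow> nbr a z i j \<Longrightarrow> a0 \<le> norm (x i - x j)"
    and "\<And>i. card (nbrs a N z i) \<le> K"
  defines "c \<equiv> deriv (deriv U) a"
  defines "K1 \<equiv> M3 / 2 + 2 * \<bar>c\<bar> / a + 2 * \<bar>c\<bar> / a0" and "K2 \<equiv> M2 + \<bar>c\<bar>"
  shows "\<bar>Gen U N x - E2 c a N z (\<lambda>i. x i - z i)\<bar>
    \<le> 4 * K1 * K2 * K * (\<Sum>(i, j)\<in>nbr_pairs a N z. norm ((x i - z i) - (x j - z j)) ^ 3)"
proof -
  define e where "e i j = (x i - z i) - (x j - z j)" for i j
  define L where "L i j = (c / a\<^sup>2 * inner (e i j) (z i - z j)) *\<^sub>R (z i - z j)" for i j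
  have K1: "0 \<le> K1" and K2: "0 \<le> K2"
    using assms(3,7) assms(5,6)[of 0] unfolding K1_def K2_def by auto
  have pair_bounds: "norm (pair_force U (x i - x j) - L i j) \<le> K1 * (norm (e i j))\<^sup>2
      \<and> norm (pair_force U (x i - x j)) + norm (L i j) \<le> K2 * norm (e i j)"
    if "i < N" "j \<in> nbrs a N z i" for i j
  proof -
    have d: "norm (z i - z j) = a" and x: "x i - x j = (z i - z j) + e i j" and "a0 \<le> norm (x i - x j)"
      using that near[of i j] unfolding nbrs_def nbr_def e_def by (auto simp: algebra_simps)
    then have "2 * \<bar>c\<bar> / norm (x i - x j) \<le> 2 * \<bar>c\<bar> / a0"
      using assms(7) by (intro divide_left_mono mult_pos_pos) auto
    then have "(M3 / 2 + 2 * \<bar>c\<bar> / a + 2 * \<bar>c\<bar> / norm (x i - x j)) * (norm (e i j))\<^sup>2 \<le> K1 * (norm (e i j))\<^sup>2"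
      unfolding K1_def by (intro mult_right_mono) auto
    moreover have "x i - x j \<noteq> 0" using \<open>a0 \<le> norm (x i - x j)\<close> assms(7) by auto
    ultimately have "norm (pair_force U (x i - x j) - L i j) \<le> K1 * (norm (e i j))\<^sup>2"
      using pair_force_linear_approx[OF assms(1,4,6) d assms(3), of "e i j"]
      unfolding x[symmetric] L_def c_def[symmetric] by linarith
    moreover have "norm (pair_force U (x i - x j)) \<le> M2 * norm (e i j)"
    proof -
      have "\<bar>norm (x i - x j) - a\<bar> \<le> norm (e i j)"
        using norm_triangle_ineq3[of "x i - x j" "z i - z j"] unfolding x d by simp
      then have "M2 * \<bar>norm (x i - x j) - a\<bar> \<le> M2 * norm (e i j)"
        using assms(5)[of 0] by (intro mult_left_mono) auto
      then show ?thesis using norm_pair_force_le[OF assms(1,4,5)] by (rule order_trans[rotated])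
    qed
    moreover have "norm (L i j) \<le> \<bar>c\<bar> * norm (e i j)"
    proof -
      have "norm (L i j) = \<bar>c\<bar> / a\<^sup>2 * \<bar>inner (e i j) (z i - z j)\<bar> * a"
        unfolding L_def using d by (simp add: abs_mult)
      also have "\<dots> \<le> \<bar>c\<bar> / a\<^sup>2 * (norm (e i j) * a) * a"
        using Cauchy_Schwarz_ineq2[of "e i j" "z i - z j"] d assms(3)
        by (intro mult_right_mono mult_left_mono) auto
      also have "\<dots> = \<bar>c\<bar> * norm (e i j)" using assms(3) by (simp add: power2_eq_square)
      finally show ?thesis .
    qed
    ultimately show ?thesis unfolding K2_def by (simp add: algebra_simps)
  qed
  have "\<bar>Gen U N x - E2 c a N z (\<lambda>i. x i - z i)\<bar>
      \<le> (\<Sum>i<N. \<bar>(norm (\<Sum>j\<in>nbrs a N z i. pair_force U (x i - x j)))\<^sup>2 - (norm (\<Sum>j\<in>nbrs a N z i. L i j))\<^sup>2\<bar>)"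
    unfolding Gen_def E2_eq_sum_norm_square L_def e_def sum_subtractf[symmetric]
    using grad_i_eq_sum_nbrs_pair_force[OF assms(1,2,7) _ far near]
    by (simp add: sum_abs del: sum_subtractf)
  also have "\<dots> \<le> (\<Sum>i<N. 2 * K1 * K2 * K * (\<Sum>j\<in>nbrs a N z i. norm (e i j) ^ 3))"
  proof (rule sum_mono)
    fix i assume "i \<in> {..<N}"
    then have "\<bar>(norm (\<Sum>j\<in>nbrs a N z i. pair_force U (x i - x j)))\<^sup>2 - (norm (\<Sum>j\<in>nbrs a N z i. L i j))\<^sup>2\<bar>
        \<le> 2 * K1 * K2 * card (nbrs a N z i) * (\<Sum>j\<in>nbrs a N z i. norm (e i j) ^ 3)"
      using pair_bounds K1 K2 by (intro norm_sum_square_diff_le) auto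
    also have "\<dots> \<le> 2 * K1 * K2 * K * (\<Sum>j\<in>nbrs a N z i. norm (e i j) ^ 3)"
      using assms(10)[of i] K1 K2 by (intro mult_right_mono mult_left_mono sum_nonneg) auto
    finally show "\<bar>(norm (\<Sum>j\<in>nbrs a N z i. pair_force U (x i - x j)))\<^sup>2 - (norm (\<Sum>j\<in>nbrs a N z i. L i j))\<^sup>2\<bar>
        \<le> 2 * K1 * K2 * K * (\<Sum>j\<in>nbrs a N z i. norm (e i j) ^ 3)" .
  qed
  also have "\<dots> = 2 * K1 * K2 * K * (2 * (\<Sum>(i, j)\<in>nbr_pairs a N z. norm (e i j) ^ 3))"
    unfolding sum_distrib_left[symmetric] e_def
    by (subst sum_nbrs_eq_double_sum_nbr_pairs) (auto simp: norm_minus_commute algebra_simps)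
  finally show ?thesis unfolding e_def by simp
qed

theorem lemma3p1:
  fixes U :: "real \<Rightarrow> real" and a a0 :: real
  assumes "C3 U" and "compact_supp U"
    and "\<And>r. U (- r) = U r"
    and "a > 0" and "\<And>r. r \<ge> 0 \<Longrightarrow> U a \<le> U r"
    and "\<And>r. r \<ge> 0 \<Longrightarrow> U r = U a \<Longrightarrow> r = a"
    and "deriv (deriv U) a > 0"
    and "0 < a0" and "a0 < a"
  shows "\<exists>C>0. \<forall>N (z :: nat \<Rightarrow> 'a::euclidean_space) (x :: nat \<Rightarrow> 'a).
    crystal U a N z \<longrightarrow>
    (\<forall>i<N. \<forall>j<N. i \<noteq> j \<longrightarrow> \<not> nbr a z i j \<longrightarrow> norm (x i - x j) > range_b U) \<longrightarrow>
    (\<forall>i<N. \<forall>j<N. nbr a z i j \<longrightarrow> norm (x i - x j) \<ge> a0) \<longrightarrow>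
    (let h = (\<lambda>i. x i - z i); c = deriv (deriv U) a;
         S = (\<Sum>(i, j)\<in>nbr_pairs a N z. (norm (h i - h j)) ^ 3)
     in \<bar>Hen U N x - (Hen U N z + 1/2 * E1 c a N z h)\<bar> \<le> C * S
      \<and> \<bar>Gen U N x - E2 c a N z h\<bar> \<le> C * S)"
proof -
  define c where "c = deriv (deriv U) a"
  obtain M2 where M2: "\<And>r. \<bar>(deriv ^^ 2) U r\<bar> \<le> M2"
    using C3_compact_supp_funpow_deriv_bounded[OF assms(1,2), of 2] by auto
  obtain M3 where M3: "\<And>r. \<bar>(deriv ^^ 3) U r\<bar> \<le> M3"
    using C3_compact_supp_funpow_deriv_bounded[OF assms(1,2), of 3] by auto
  have U'a: "deriv U a = 0" by (rule C3_deriv_eq_0_at_min[OF assms(1,4,5)])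
  obtain K where K: "\<And>N (z :: nat \<Rightarrow> 'a) i. crystal U a N z \<Longrightarrow> card (nbrs a N z i) \<le> K"
    using crystal_card_nbrs_bounded[OF assms(4) strict_min_le_range_b[OF assms(2,4,6)]] by blast
  define CH where "CH = M3 / 6 + 2 * \<bar>c\<bar> / a"
  define CG where "CG = 4 * (M3 / 2 + 2 * \<bar>c\<bar> / a + 2 * \<bar>c\<bar> / a0) * (M2 + \<bar>c\<bar>) * K"
  have "0 \<le> CH" "0 \<le> CG" using M2[of 0] M3[of 0] assms(4,8) unfolding CH_def CG_def by auto
  then have C: "0 < CH + CG + 1" "CH \<le> CH + CG + 1" "CG \<le> CH + CG + 1" by auto
  show ?thesis
  proof (intro exI[of _ "CH + CG + 1"] conjI allI impI)
    fix N and z x :: "nat \<Rightarrow> 'a"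
    assume cr: "crystal U a N z"
      and far: "\<forall>i<N. \<forall>j<N. i \<noteq> j \<longrightarrow> \<not> nbr a z i j \<longrightarrow> norm (x i - x j) > range_b U"
      and near: "\<forall>i<N. \<forall>j<N. nbr a z i j \<longrightarrow> norm (x i - x j) \<ge> a0"
    define S where "S = (\<Sum>(i, j)\<in>nbr_pairs a N z. norm ((x i - z i) - (x j - z j)) ^ 3)"
    have "0 \<le> S" unfolding S_def by (auto intro: sum_nonneg)
    have "\<bar>Hen U N x - (Hen U N z + 1/2 * E1 c a N z (\<lambda>i. x i - z i))\<bar> \<le> CH * S"
      unfolding CH_def S_def c_def using far
      by (intro Hen_harmonic_approx[OF assms(1,2,4) U'a M3 cr]) auto
    moreover have "\<bar>Gen U N x - E2 c a N z (\<lambda>i. x i - z i)\<bar> \<le> CG * S"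
      unfolding CG_def S_def c_def using far near K[OF cr]
      by (intro Gen_harmonic_approx[OF assms(1,2,4) U'a M2 M3 assms(8)]) auto
    ultimately show "let h = (\<lambda>i. x i - z i); c = deriv (deriv U) a;
         S = (\<Sum>(i, j)\<in>nbr_pairs a N z. (norm (h i - h j)) ^ 3)
       in \<bar>Hen U N x - (Hen U N z + 1/2 * E1 c a N z h)\<bar> \<le> (CH + CG + 1) * S
        \<and> \<bar>Gen U N x - E2 c a N z h\<bar> \<le> (CH + CG + 1) * S"
      using mult_right_mono[OF C(2) \<open>0 \<le> S\<close>] mult_right_mono[OF C(3) \<open>0 \<le> S\<close>]
      unfolding Let_def c_def[symmetric] S_def[symmetric] by linarith
  qed (rule C(1))
qed

end
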